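(* Let $\mathcal H$ be a separable Hilbert space and let $\Phi:B(\mathcal H)\to B(\mathcal H)$ be a quantum channel with Kraus representation $\Phi(A)=\sum_{k\ge1}V_k^*AV_k$, where $V_k\in B(\mathcal H)$ and $\sum_k V_k^*V_k=I$. Then the fixed point space $\mathcal F(\Phi)=\{A\in B(\mathcal H):\Phi(A)=A\}$ is a von Neumann algebra if and only if $\mathcal F(\Phi)\subseteq\mathcal N(\Phi)$. In this case, \[ \mathcal F(\Phi)=\{V_j,V_j^*:\ j=1,2,\dots\}', \] where $'$ denotes the commutant.
   Context: A quantum channel is a unital normal completely positive map $\Phi:B(\mathcal H)\to B(\mathcal H)$. The multiplicative domain of a channel $\Psi$ is $\mathcal M(\Psi)=\{A\in B(\mathcal H): \Psi(A^*A)=\Psi(A)^*\Psi(A),\ \Psi(AA^* )=\Psi(A)\Psi(A)^*\}$, and the decoherence free algebra is $\mathcal N(\Phi)=\bigcap_{n\ge1}\mathcal M(\Phi^n)$. *)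

theory Defs
  imports "HOL-Analysis.Analysis"
begin

class complex_inner = real_normed_vector +
  fixes scaleC :: "complex \<Rightarrow> 'a \<Rightarrow> 'a"
    and cinner :: "'a \<Rightarrow> 'a \<Rightarrow> complex"
  assumes scaleC_add_right: "scaleC a (x + y) = scaleC a x + scaleC a y"
    and scaleC_add_left: "scaleC (a + b) x = scaleC a x + scaleC b x"
    and scaleC_scaleC: "scaleC a (scaleC b x) = scaleC (a * b) x"
    and scaleC_one: "scaleC 1 x = x"
    and scaleC_of_real: "scaleC (complex_of_real r) x = scaleR r x"
    and cinner_commute: "cinner x y = cnj (cinner y x)"
    and cinner_add_left: "cinner (x + y) z = cinner x z + cinner y z"
    and cinner_scaleC_left: "cinner (scaleC a x) y = cnj a * cinner x y"
    and cinner_self_norm: "cinner x x = complex_of_real ((norm x)\<^sup>2)"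

class chilbert_space = complex_inner + complete_space

definition bop :: "('a::complex_inner \<Rightarrow> 'a) \<Rightarrow> bool" where
  "bop A \<longleftrightarrow> (\<forall>x y. A (x + y) = A x + A y) \<and> (\<forall>c x. A (scaleC c x) = scaleC c (A x))
            \<and> (\<exists>K. \<forall>x. norm (A x) \<le> K * norm x)"

definition BH :: "('a::complex_inner \<Rightarrow> 'a) set" where
  "BH = {A. bop A}"

text \<open>Adjoint: the (unique, by Riesz) operator with <A x, y> = <x, A* y>.\<close>
definition adj :: "('a::complex_inner \<Rightarrow> 'a) \<Rightarrow> ('a \<Rightarrow> 'a)" where
  "adj A = (SOME B. \<forall>x y. cinner (A x) y = cinner x (B y))"

definition op_add :: "('a::complex_inner \<Rightarrow> 'a) \<Rightarrow> ('a \<Rightarrow> 'a) \<Rightarrow> ('a \<Rightarrow> 'a)" where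
  "op_add A B = (\<lambda>x. A x + B x)"

definition op_scale :: "complex \<Rightarrow> ('a::complex_inner \<Rightarrow> 'a) \<Rightarrow> ('a \<Rightarrow> 'a)" where
  "op_scale c A = (\<lambda>x. scaleC c (A x))"

text \<open>Operator product is composition: (A B) x = A (B x).\<close>

definition commutant :: "('a::complex_inner \<Rightarrow> 'a) set \<Rightarrow> ('a \<Rightarrow> 'a) set" where
  "commutant S = {A \<in> BH. \<forall>B\<in>S. A \<circ> B = B \<circ> A}"

text \<open>Closedness in the weak operator topology, via its basic neighbourhoods.\<close>
definition wot_closed :: "('a::complex_inner \<Rightarrow> 'a) set \<Rightarrow> bool" where
  "wot_closed M \<longleftrightarrow> (\<forall>A\<in>BH.
     (\<forall>(xs :: ('a \<times> 'a) list) (e::real). e > 0 \<longrightarrow>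
        (\<exists>B\<in>M. \<forall>(x, y)\<in>set xs. cmod (cinner y (A x) - cinner y (B x)) < e))
     \<longrightarrow> A \<in> M)"

definition von_neumann_algebra :: "('a::complex_inner \<Rightarrow> 'a) set \<Rightarrow> bool" where
  "von_neumann_algebra M \<longleftrightarrow> M \<subseteq> BH \<and> id \<in> M
     \<and> (\<forall>A\<in>M. \<forall>B\<in>M. op_add A B \<in> M \<and> A \<circ> B \<in> M)
     \<and> (\<forall>c. \<forall>A\<in>M. op_scale c A \<in> M)
     \<and> (\<forall>A\<in>M. adj A \<in> M)
     \<and> wot_closed M"

text \<open>The channel with (countable) Kraus family V_1, V_2, ... (indexed here by nat from 0;
finite families are obtained by taking V k = 0 for large k):
Phi(A) x = sum_k V_k* A V_k x, the series converging in the strong operator topology.\<close>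
definition kraus_channel :: "(nat \<Rightarrow> ('a::complex_inner \<Rightarrow> 'a)) \<Rightarrow> ('a \<Rightarrow> 'a) \<Rightarrow> ('a \<Rightarrow> 'a)" where
  "kraus_channel V A = (\<lambda>x. lim (\<lambda>n. \<Sum>k<n. adj (V k) (A (V k x))))"

definition mult_domain :: "(('a::complex_inner \<Rightarrow> 'a) \<Rightarrow> ('a \<Rightarrow> 'a)) \<Rightarrow> ('a \<Rightarrow> 'a) set" where
  "mult_domain Psi = {A \<in> BH. Psi (adj A \<circ> A) = adj (Psi A) \<circ> Psi A
                             \<and> Psi (A \<circ> adj A) = Psi A \<circ> adj (Psi A)}"

definition decoherence_free :: "(('a::complex_inner \<Rightarrow> 'a) \<Rightarrow> ('a \<Rightarrow> 'a)) \<Rightarrow> ('a \<Rightarrow> 'a) set" where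
  "decoherence_free Phi = (\<Inter>n\<in>{1..}. mult_domain (Phi ^^ n))"

definition fixed_points :: "(('a::complex_inner \<Rightarrow> 'a) \<Rightarrow> ('a \<Rightarrow> 'a)) \<Rightarrow> ('a \<Rightarrow> 'a) set" where
  "fixed_points Phi = {A \<in> BH. Phi A = A}"

definition separable_space :: "'a::topological_space itself \<Rightarrow> bool" where
  "separable_space _ \<longleftrightarrow> (\<exists>D::'a set. countable D \<and> closure D = UNIV)"

end

theory Submission
  imports Defs
begin

(* If the fixed points form an algebra, then with A also A*A and AA* are fixed, so A lies in the
   multiplicative domain of every power of Phi. Conversely, the identity
     Phi(A*A) - Phi(A)*A - A*Phi(A) + A*A = sum_k [A, V_k]* [A, V_k]
   shows that a fixed point A with Phi(A*A) = A*A commutes with every V_k. As Phi commutes with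
   taking adjoints, applying this to A and to A* puts every fixed point of the multiplicative
   domain into the commutant of {V_k, V_k*}. That commutant consists of fixed points because
   sum_k V_k* V_k = I, and the commutant of a self-adjoint set is a von Neumann algebra.
   Adjoints come from the Riesz representation theorem. *)

instance chilbert_space \<subseteq> banach ..

section \<open>Complex inner product spaces\<close>

lemma cinner_add_right: "cinner x (y + z) = cinner x y + cinner x (z::'a::complex_inner)"
  by (metis cinner_add_left cinner_commute complex_cnj_add)

lemma cinner_scaleC_right: "cinner x (scaleC a y) = a * cinner x (y::'a::complex_inner)"
  by (metis cinner_commute cinner_scaleC_left complex_cnj_cnj complex_cnj_mult)

lemma cnj_cinner: "cnj (cinner x y) = cinner y (x::'a::complex_inner)"
  by (simp add: cinner_commute[of y x])

lemma cinner_zero_left [simp]: "cinner 0 (x::'a::complex_inner) = 0"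
  using cinner_add_left[of 0 0 x] by simp

lemma cinner_zero_right [simp]: "cinner x (0::'a::complex_inner) = 0"
  using cinner_add_right[of x 0 0] by simp

lemma cinner_diff_left: "cinner (x - y) z = cinner x z - cinner y (z::'a::complex_inner)"
  using cinner_add_left[of "x - y" y z] by (simp add: eq_diff_eq)

lemma cinner_diff_right: "cinner x (y - z) = cinner x y - cinner x (z::'a::complex_inner)"
  using cinner_add_right[of x "y - z" z] by (simp add: eq_diff_eq)

lemma cinner_sum_right: "cinner x (\<Sum>k\<in>I. f k) = (\<Sum>k\<in>I. cinner (x::'a::complex_inner) (f k))"
  by (induction I rule: infinite_finite_induct) (auto simp: cinner_add_right)

lemma cinner_ext: "(\<And>w. cinner w x = cinner w y) \<Longrightarrow> x = (y::'a::complex_inner)"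
  by (metis cinner_diff_right cinner_self_norm eq_iff_diff_eq_0 norm_eq_zero of_real_eq_0_iff
      zero_eq_power2)

lemma cinner_ext_left: "(\<And>w. cinner x w = cinner y w) \<Longrightarrow> x = (y::'a::complex_inner)"
  by (metis cinner_commute cinner_ext)

lemma of_real_norm_diff_sq:
  "complex_of_real ((norm (x - y))\<^sup>2)
    = cinner x x - cinner x y - cinner y x + cinner y (y::'a::complex_inner)"
  by (simp only: cinner_self_norm[symmetric] cinner_diff_left cinner_diff_right)
    (simp add: algebra_simps)

lemma norm_scaleC: "norm (scaleC a x) = cmod a * norm (x::'a::complex_inner)"
proof -
  have "complex_of_real ((norm (scaleC a x))\<^sup>2) = cnj a * a * complex_of_real ((norm x)\<^sup>2)"
    by (metis cinner_scaleC_left cinner_scaleC_right cinner_self_norm mult.assoc)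
  also have "\<dots> = complex_of_real ((cmod a * norm x)\<^sup>2)"
    by (metis complex_norm_square mult.commute of_real_mult power_mult_distrib)
  finally have "(norm (scaleC a x))\<^sup>2 = (cmod a * norm x)\<^sup>2"
    using of_real_eq_iff by blast
  then show ?thesis
    by (simp add: power2_eq_iff_nonneg)
qed

lemma parallelogram_law:
  "(norm (x + y))\<^sup>2 + (norm (x - y))\<^sup>2 = 2 * (norm x)\<^sup>2 + 2 * (norm (y::'a::complex_inner))\<^sup>2"
proof -
  have "complex_of_real ((norm (x + y))\<^sup>2 + (norm (x - y))\<^sup>2)
      = cinner (x + y) (x + y) + cinner (x - y) (x - y)"
    by (simp only: of_real_add cinner_self_norm)
  also have "\<dots> = 2 * cinner x x + 2 * cinner y y"
    by (simp add: cinner_add_left cinner_add_right cinner_diff_left cinner_diff_right)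
  also have "\<dots> = complex_of_real (2 * (norm x)\<^sup>2 + 2 * (norm y)\<^sup>2)"
    by (simp add: cinner_self_norm)
  finally show ?thesis
    by (simp only: of_real_eq_iff)
qed

lemma norm_sub_projection_sq:
  fixes z m :: "'a::complex_inner"
  assumes "m \<noteq> 0"
  shows "(norm (z - scaleC (cinner m z / complex_of_real ((norm m)\<^sup>2)) m))\<^sup>2
        = (norm z)\<^sup>2 - (cmod (cinner m z))\<^sup>2 / (norm m)\<^sup>2"
proof -
  define a M where "a = cinner m z" and "M = complex_of_real ((norm m)\<^sup>2)"
  have "M \<noteq> 0" and "cnj M = M"
    using assms by (simp_all add: M_def)
  have "complex_of_real ((norm (z - scaleC (a / M) m))\<^sup>2)
      = cinner z z - (a / M) * cnj a - cnj (a / M) * a + cnj (a / M) * (a / M) * M"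
    unfolding of_real_norm_diff_sq cinner_scaleC_left cinner_scaleC_right
      cinner_commute[of z m] cinner_self_norm[of m, folded M_def] a_def[symmetric]
    by (simp add: mult.assoc)
  also have "\<dots> = cinner z z - a * cnj a / M"
    using \<open>M \<noteq> 0\<close> \<open>cnj M = M\<close> by (simp add: field_simps)
  also have "\<dots> = complex_of_real ((norm z)\<^sup>2 - (cmod a)\<^sup>2 / (norm m)\<^sup>2)"
    by (simp only: M_def of_real_diff of_real_divide complex_norm_square cinner_self_norm)
  finally show ?thesis
    unfolding a_def M_def by (simp only: of_real_eq_iff)
qed

lemma cinner_cauchy_schwarz: "cmod (cinner x y) \<le> norm x * norm (y::'a::complex_inner)"
proof (cases "x = 0")
  case False
  have "0 \<le> (norm y)\<^sup>2 - (cmod (cinner x y))\<^sup>2 / (norm x)\<^sup>2"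
    unfolding norm_sub_projection_sq[OF False, of y, symmetric] by simp
  then have "(cmod (cinner x y))\<^sup>2 \<le> (norm x * norm y)\<^sup>2"
    using False by (simp add: field_simps power_mult_distrib)
  then show ?thesis
    by (simp add: power2_le_iff_abs_le)
qed simp

lemma bounded_linear_cinner_right: "bounded_linear (cinner (x::'a::complex_inner))"
proof (rule bounded_linear_intro[where K = "norm x"])
  show "norm (cinner x y) \<le> norm y * norm x" for y
    using cinner_cauchy_schwarz[of x y] by (simp add: mult.commute)
  show "cinner x (r *\<^sub>R y) = r *\<^sub>R cinner x y" for r y
    by (metis cinner_scaleC_right scaleC_of_real scaleR_conv_of_real)
qed (rule cinner_add_right)

lemma le_of_sq_le_mult:
  fixes a c :: real
  assumes "0 \<le> c" and "a\<^sup>2 \<le> c * a"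
  shows "a \<le> c"
  using assms by (cases "a \<le> 0") (auto simp: power2_eq_square mult_le_cancel_right)

section \<open>Nearest points and the Riesz representation\<close>

lemma Cauchy_if_dist_sq_le_add:
  fixes X :: "nat \<Rightarrow> 'a::metric_space"
  assumes dist_le: "\<And>i j. (dist (X i) (X j))\<^sup>2 \<le> g i + g j" and "g \<longlonglongrightarrow> 0"
  shows "Cauchy X"
proof (rule metric_CauchyI)
  fix e :: real
  assume "0 < e"
  then have "eventually (\<lambda>n. g n < e\<^sup>2 / 2) sequentially"
    using order_tendstoD(2)[OF \<open>g \<longlonglongrightarrow> 0\<close>, of "e\<^sup>2 / 2"] by simp
  then obtain M where M: "\<And>n. n \<ge> M \<Longrightarrow> g n < e\<^sup>2 / 2"
    by (auto simp: eventually_sequentially)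
  have "dist (X m) (X n) < e" if "m \<ge> M" and "n \<ge> M" for m n
  proof -
    have "(dist (X m) (X n))\<^sup>2 < e\<^sup>2"
      using dist_le[of m n] M[OF that(1)] M[OF that(2)] by linarith
    then show ?thesis
      using \<open>0 < e\<close> by (simp add: power2_less_imp_less)
  qed
  then show "\<exists>M. \<forall>m\<ge>M. \<forall>n\<ge>M. dist (X m) (X n) < e"
    by blast
qed

lemma dist_sq_le_of_near_lower_bound:
  fixes S :: "'a::complex_inner set"
  assumes "convex S" and "a \<in> S" and "b \<in> S" and "0 \<le> D"
    and lower: "\<And>m. m \<in> S \<Longrightarrow> D \<le> norm (u - m)"
  shows "(dist a b)\<^sup>2 \<le> 2 * ((norm (u - a))\<^sup>2 - D\<^sup>2) + 2 * ((norm (u - b))\<^sup>2 - D\<^sup>2)"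
proof -
  have "(1/2) *\<^sub>R a + (1/2) *\<^sub>R b \<in> S"
    using assms by (intro convexD) auto
  moreover have "(u - a) + (u - b) = 2 *\<^sub>R (u - ((1/2) *\<^sub>R a + (1/2) *\<^sub>R b))"
    by (simp add: algebra_simps scaleR_2)
  ultimately have "2 * D \<le> norm ((u - a) + (u - b))"
    using lower by simp
  then have "(2 * D)\<^sup>2 \<le> (norm ((u - a) + (u - b)))\<^sup>2"
    using \<open>0 \<le> D\<close> by (intro power_mono) simp_all
  moreover have "(dist a b)\<^sup>2 = (norm ((u - a) - (u - b)))\<^sup>2"
    by (simp add: dist_norm norm_minus_commute)
  ultimately show ?thesis
    using parallelogram_law[of "u - a" "u - b"] by (simp add: power_mult_distrib)
qed

lemma nearest_point_exists:
  fixes S :: "'a::chilbert_space set"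
  assumes "closed S" and "convex S" and "S \<noteq> {}"
  obtains n where "n \<in> S" and "\<And>m. m \<in> S \<Longrightarrow> norm (u - n) \<le> norm (u - m)"
proof -
  define D where "D = infdist u S"
  define e :: "nat \<Rightarrow> real" where "e j = inverse (real (Suc j))" for j
  have D_le: "D \<le> norm (u - m)" if "m \<in> S" for m
    using infdist_le[OF that, of u] by (simp add: D_def dist_norm)
  have "0 \<le> D"
    by (simp add: D_def infdist_nonneg)
  have "\<exists>n\<in>S. norm (u - n) < D + e j" for j
  proof -
    have "(INF m\<in>S. dist u m) < D + e j"
      unfolding D_def infdist_notempty[OF assms(3)] by (simp add: e_def)
    then obtain m where "m \<in> S" and "dist u m < D + e j"
      using cINF_less_iff[OF assms(3) bdd_below_image_dist] by blast
    then show ?thesis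
      by (auto simp: dist_norm)
  qed
  then obtain n where n_in: "\<And>j. n j \<in> S" and n_close: "\<And>j. norm (u - n j) < D + e j"
    by metis
  have "e \<longlonglongrightarrow> 0"
    unfolding e_def by (rule LIMSEQ_inverse_real_of_nat)
  have "(norm (u - n j))\<^sup>2 \<le> (D + e j)\<^sup>2" for j
    using n_close[of j] by (metis less_imp_le norm_ge_zero power_mono)
  then have "(dist (n i) (n j))\<^sup>2 \<le> 2 * ((D + e i)\<^sup>2 - D\<^sup>2) + 2 * ((D + e j)\<^sup>2 - D\<^sup>2)" for i j
    using dist_sq_le_of_near_lower_bound[OF \<open>convex S\<close> n_in n_in \<open>0 \<le> D\<close> D_le, of i j]
    by (smt (verit))
  moreover have "(\<lambda>j. 2 * ((D + e j)\<^sup>2 - D\<^sup>2)) \<longlonglongrightarrow> 0"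
    by (auto intro!: tendsto_eq_intros \<open>e \<longlonglongrightarrow> 0\<close>)
  ultimately have "Cauchy n"
    by (rule Cauchy_if_dist_sq_le_add)
  then obtain n0 where "n \<longlonglongrightarrow> n0"
    using Cauchy_convergent convergent_def by blast
  have "norm (u - n0) \<le> D"
  proof (rule LIMSEQ_le)
    show "(\<lambda>j. norm (u - n j)) \<longlonglongrightarrow> norm (u - n0)"
      by (intro tendsto_intros \<open>n \<longlonglongrightarrow> n0\<close>)
    show "(\<lambda>j. D + e j) \<longlonglongrightarrow> D"
      using tendsto_add[OF tendsto_const \<open>e \<longlonglongrightarrow> 0\<close>, of D] by simp
  qed (use n_close less_imp_le in blast)
  then show ?thesis
    using that closed_sequentially[OF \<open>closed S\<close> n_in \<open>n \<longlonglongrightarrow> n0\<close>] D_le by force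
qed

lemma nearest_point_orthogonal:
  fixes S :: "'a::complex_inner set"
  assumes add: "\<And>x y. x \<in> S \<Longrightarrow> y \<in> S \<Longrightarrow> x + y \<in> S"
    and scale: "\<And>c x. x \<in> S \<Longrightarrow> scaleC c x \<in> S"
    and "n \<in> S" and nearest: "\<And>m. m \<in> S \<Longrightarrow> norm (u - n) \<le> norm (u - m)"
    and "m \<in> S"
  shows "cinner m (u - n) = 0"
proof (cases "m = 0")
  case False
  define t where "t = cinner m (u - n) / complex_of_real ((norm m)\<^sup>2)"
  have "norm (u - n) \<le> norm (u - (n + scaleC t m))"
    using nearest add scale \<open>n \<in> S\<close> \<open>m \<in> S\<close> by blast
  then have "(norm (u - n))\<^sup>2 \<le> (norm ((u - n) - scaleC t m))\<^sup>2"
    by (simp add: diff_diff_eq power_mono)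
  also have "\<dots> = (norm (u - n))\<^sup>2 - (cmod (cinner m (u - n)))\<^sup>2 / (norm m)\<^sup>2"
    unfolding t_def by (rule norm_sub_projection_sq[OF False])
  finally show ?thesis
    using False by (simp add: divide_le_0_iff)
qed simp

theorem riesz_representation:
  fixes f :: "'a::chilbert_space \<Rightarrow> complex"
  assumes add: "\<And>x y. f (x + y) = f x + f y"
    and scale: "\<And>c x. f (scaleC c x) = c * f x"
    and bound: "\<And>x. cmod (f x) \<le> K * norm x"
  obtains w where "\<And>x. f x = cinner w x"
proof (cases "\<forall>x. f x = 0")
  case True
  then show ?thesis
    by (intro that[of 0]) simp
next
  case False
  then obtain u where "f u \<noteq> 0"
    by blast
  have lin: "bounded_linear f"
  proof (rule bounded_linear_intro[where K = K])
    show "f (r *\<^sub>R x) = r *\<^sub>R f x" for r x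
      using scale[of "complex_of_real r" x] by (simp add: scaleC_of_real scaleR_conv_of_real)
  qed (simp_all add: add bound mult.commute)
  define N where "N = f -` {0}"
  have "closed N"
    unfolding N_def by (intro continuous_closed_vimage linear_continuous_at lin) simp
  moreover have "convex N"
    unfolding N_def by (intro convex_linear_vimage bounded_linear.linear[OF lin]) simp
  moreover have "0 \<in> N"
    by (simp add: N_def linear_simps(3)[OF lin])
  ultimately obtain n where "n \<in> N" and nearest: "\<And>m. m \<in> N \<Longrightarrow> norm (u - n) \<le> norm (u - m)"
    using nearest_point_exists by blast
  define z where "z = u - n"
  have "f z \<noteq> 0"
    using \<open>f u \<noteq> 0\<close> \<open>n \<in> N\<close> by (simp add: z_def N_def linear_simps(2)[OF lin])
  then have "z \<noteq> 0"
    using linear_simps(3)[OF lin] by auto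
  have orth: "cinner z m = 0" if "m \<in> N" for m
  proof -
    have "cinner m z = 0"
      unfolding z_def using nearest_point_orthogonal[of N n u m] \<open>n \<in> N\<close> nearest that
      by (simp add: N_def add scale)
    then show ?thesis
      by (metis cinner_commute complex_cnj_zero)
  qed
  show ?thesis
  proof (rule that)
    fix x
    have "x - scaleC (f x / f z) z \<in> N"
      using \<open>f z \<noteq> 0\<close> by (simp add: N_def linear_simps(2)[OF lin] scale)
    then have "cinner z (x - scaleC (f x / f z) z) = 0"
      by (rule orth)
    then have "cinner z x = f x / f z * cinner z z"
      by (simp add: cinner_diff_right cinner_scaleC_right)
    then show "f x = cinner (scaleC (cnj (f z) / complex_of_real ((norm z)\<^sup>2)) z) x"
      using \<open>f z \<noteq> 0\<close> \<open>z \<noteq> 0\<close> by (simp add: cinner_scaleC_left cinner_self_norm)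
  qed
qed

section \<open>Bounded operators and adjoints\<close>

lemma BH_iff: "A \<in> BH \<longleftrightarrow> bop A"
  by (simp add: BH_def)

lemma bop_add: "bop A \<Longrightarrow> A (x + y) = A x + A y"
  by (simp add: bop_def)

lemma bop_scaleC: "bop A \<Longrightarrow> A (scaleC c x) = scaleC c (A x)"
  by (simp add: bop_def)

lemma bop_bound:
  fixes A :: "'a::complex_inner \<Rightarrow> 'a"
  assumes "bop A"
  obtains K where "0 \<le> K" and "\<And>x. norm (A x) \<le> K * norm x"
proof -
  obtain K where K: "\<And>x. norm (A x) \<le> K * norm x"
    using assms by (auto simp: bop_def)
  have "norm (A x) \<le> max K 0 * norm x" for x
    using K[of x] by (smt (verit) mult_right_mono norm_ge_zero)
  then show ?thesis
    using that[of "max K 0"] by simp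
qed

lemma bop_id: "bop (id :: 'a::complex_inner \<Rightarrow> 'a)"
  unfolding bop_def by (auto intro: exI[of _ 1])

lemma bop_comp:
  assumes "bop A" and "bop B"
  shows "bop (A \<circ> B)"
proof -
  obtain K L where "0 \<le> K" "\<And>x. norm (A x) \<le> K * norm x" "\<And>x. norm (B x) \<le> L * norm x"
    using bop_bound[OF assms(1)] bop_bound[OF assms(2)] by metis
  then have "norm (A (B x)) \<le> (K * L) * norm x" for x
    by (metis mult.assoc mult_left_mono order_trans)
  then show ?thesis
    using assms unfolding bop_def by auto
qed

lemma bop_op_add:
  assumes "bop A" and "bop B"
  shows "bop (op_add A B)"
proof -
  obtain K L where "\<And>x. norm (A x) \<le> K * norm x" "\<And>x. norm (B x) \<le> L * norm x"
    using bop_bound[OF assms(1)] bop_bound[OF assms(2)] by metis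
  then have "\<forall>x. norm (A x + B x) \<le> (K + L) * norm x"
    by (smt (verit) distrib_right norm_triangle_ineq)
  moreover have "\<forall>x y. A (x + y) + B (x + y) = (A x + B x) + (A y + B y)"
    using assms by (simp add: bop_add algebra_simps)
  moreover have "\<forall>c x. A (scaleC c x) + B (scaleC c x) = scaleC c (A x + B x)"
    using assms by (simp add: bop_scaleC scaleC_add_right)
  ultimately show ?thesis
    unfolding bop_def op_add_def by blast
qed

lemma bop_op_scale:
  assumes "bop A"
  shows "bop (op_scale c A)"
proof -
  obtain K where "0 \<le> K" "\<And>x. norm (A x) \<le> K * norm x"
    using bop_bound[OF assms] by blast
  then have "\<forall>x. norm (scaleC c (A x)) \<le> (cmod c * K) * norm x"
    by (simp add: norm_scaleC mult.assoc mult_left_mono)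
  moreover have "\<forall>x y. scaleC c (A (x + y)) = scaleC c (A x) + scaleC c (A y)"
    using assms by (simp add: bop_add scaleC_add_right)
  moreover have "\<forall>d x. scaleC c (A (scaleC d x)) = scaleC d (scaleC c (A x))"
    using assms by (simp add: bop_scaleC scaleC_scaleC mult.commute)
  ultimately show ?thesis
    unfolding bop_def op_scale_def by blast
qed

lemma adj_exists:
  fixes A :: "'a::chilbert_space \<Rightarrow> 'a"
  assumes "bop A"
  shows "\<exists>B. \<forall>x y. cinner (A x) y = cinner x (B y)"
proof -
  obtain K where "0 \<le> K" and K: "\<And>x. norm (A x) \<le> K * norm x"
    using bop_bound[OF assms] by blast
  have "\<exists>w. \<forall>x. cinner y (A x) = cinner w x" for y
  proof (rule riesz_representation)
    show "cinner y (A (x + x')) = cinner y (A x) + cinner y (A x')" for x x'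
      using assms by (simp add: bop_add cinner_add_right)
    show "cinner y (A (scaleC c x)) = c * cinner y (A x)" for c x
      using assms by (simp add: bop_scaleC cinner_scaleC_right)
    show "cmod (cinner y (A x)) \<le> (norm y * K) * norm x" for x
      using cinner_cauchy_schwarz[of y "A x"] K[of x]
      by (metis mult.assoc mult_left_mono norm_ge_zero order_trans)
  qed blast
  then have "\<exists>w. \<forall>x. cinner (A x) y = cinner x w" for y
    by (metis cinner_commute)
  then show ?thesis
    by metis
qed

lemma cinner_adj_right:
  fixes A :: "'a::chilbert_space \<Rightarrow> 'a"
  assumes "bop A"
  shows "cinner (A x) y = cinner x (adj A y)"
  using someI_ex[OF adj_exists[OF assms]] unfolding adj_def by blast

lemma cinner_adj_left:
  fixes A :: "'a::chilbert_space \<Rightarrow> 'a"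
  assumes "bop A"
  shows "cinner (adj A y) x = cinner y (A x)"
  by (metis assms cinner_adj_right cinner_commute)

lemma bop_adj:
  fixes A :: "'a::chilbert_space \<Rightarrow> 'a"
  assumes "bop A"
  shows "bop (adj A)"
proof -
  obtain K where "0 \<le> K" and K: "\<And>x. norm (A x) \<le> K * norm x"
    using bop_bound[OF assms] by blast
  have "norm (adj A y) \<le> K * norm y" for y
  proof (rule le_of_sq_le_mult)
    show "0 \<le> K * norm y"
      using \<open>0 \<le> K\<close> by simp
    have "(norm (adj A y))\<^sup>2 = cmod (cinner (adj A y) (adj A y))"
      unfolding cinner_self_norm norm_of_real by simp
    also have "\<dots> = cmod (cinner (A (adj A y)) y)"
      by (simp only: cinner_adj_right[OF assms])
    also have "\<dots> \<le> K * norm (adj A y) * norm y"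
      using cinner_cauchy_schwarz[of "A (adj A y)" y] K[of "adj A y"]
      by (meson mult_right_mono norm_ge_zero order_trans)
    finally show "(norm (adj A y))\<^sup>2 \<le> K * norm y * norm (adj A y)"
      by (simp add: algebra_simps)
  qed
  moreover have "adj A (x + y) = adj A x + adj A y" for x y
    by (rule cinner_ext) (simp add: cinner_adj_right[OF assms, symmetric] cinner_add_right)
  moreover have "adj A (scaleC c x) = scaleC c (adj A x)" for c x
    by (rule cinner_ext) (simp add: cinner_adj_right[OF assms, symmetric] cinner_scaleC_right)
  ultimately show ?thesis
    unfolding bop_def by blast
qed

lemma adj_adj:
  fixes A :: "'a::chilbert_space \<Rightarrow> 'a"
  assumes "bop A"
  shows "adj (adj A) = A"
proof
  show "adj (adj A) y = A y" for y
    by (rule cinner_ext_left)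
      (simp add: cinner_adj_left[OF bop_adj[OF assms]] cinner_adj_right[OF assms])
qed

lemma adj_commute:
  fixes A B :: "'a::chilbert_space \<Rightarrow> 'a"
  assumes "bop A" and "bop B" and "A \<circ> B = B \<circ> A"
  shows "adj A \<circ> adj B = adj B \<circ> adj A"
proof
  fix x
  show "(adj A \<circ> adj B) x = (adj B \<circ> adj A) x"
  proof (rule cinner_ext)
    fix w
    have "cinner w (adj A (adj B x)) = cinner (B (A w)) x"
      by (simp add: assms cinner_adj_right[symmetric])
    also have "\<dots> = cinner (A (B w)) x"
      using fun_cong[OF assms(3), of w] by simp
    also have "\<dots> = cinner w (adj B (adj A x))"
      by (simp add: assms cinner_adj_right)
    finally show "cinner w ((adj A \<circ> adj B) x) = cinner w ((adj B \<circ> adj A) x)"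
      by simp
  qed
qed

section \<open>Commutants and decoherence-free algebras\<close>

lemma commutant_iff: "A \<in> commutant S \<longleftrightarrow> bop A \<and> (\<forall>D\<in>S. A \<circ> D = D \<circ> A)"
  by (simp add: commutant_def BH_iff)

lemma wot_closed_commutant:
  fixes S :: "('a::chilbert_space \<Rightarrow> 'a) set"
  assumes "S \<subseteq> BH"
  shows "wot_closed (commutant S)"
  unfolding wot_closed_def
proof (intro ballI impI)
  fix A :: "'a \<Rightarrow> 'a"
  assume "A \<in> BH"
    and approx: "\<forall>(xs :: ('a \<times> 'a) list) e. e > 0 \<longrightarrow>
      (\<exists>B\<in>commutant S. \<forall>(x, y)\<in>set xs. cmod (cinner y (A x) - cinner y (B x)) < e)"
  have "A \<circ> D = D \<circ> A" if "D \<in> S" for D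
  proof (rule ext, rule cinner_ext)
    fix z w
    have D: "bop D"
      using assms that by (auto simp: BH_iff)
    have "cmod (cinner w (A (D z)) - cinner w (D (A z))) < e" if "e > 0" for e
    proof -
      obtain B where "B \<in> commutant S" and close:
        "\<forall>(x, y)\<in>set [(D z, w), (z, adj D w)]. cmod (cinner y (A x) - cinner y (B x)) < e / 2"
        using approx \<open>e > 0\<close> by (meson half_gt_zero)
      have "B \<circ> D = D \<circ> B"
        using \<open>B \<in> commutant S\<close> \<open>D \<in> S\<close> by (simp add: commutant_iff)
      then have "cinner w (B (D z)) = cinner (adj D w) (B z)"
        using cinner_adj_left[OF D, of w "B z"] by (metis comp_apply)
      moreover have "cinner w (D (A z)) = cinner (adj D w) (A z)"
        by (rule cinner_adj_left[OF D, symmetric])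
      ultimately have "cinner w (A (D z)) - cinner w (D (A z))
          = (cinner w (A (D z)) - cinner w (B (D z)))
            - (cinner (adj D w) (A z) - cinner (adj D w) (B z))"
        by simp
      then have "cmod (cinner w (A (D z)) - cinner w (D (A z)))
          \<le> cmod (cinner w (A (D z)) - cinner w (B (D z)))
            + cmod (cinner (adj D w) (A z) - cinner (adj D w) (B z))"
        by (metis norm_triangle_ineq4)
      moreover have "cmod (cinner w (A (D z)) - cinner w (B (D z))) < e / 2"
        and "cmod (cinner (adj D w) (A z) - cinner (adj D w) (B z)) < e / 2"
        using close by simp_all
      ultimately show ?thesis
        by linarith
    qed
    then show "cinner w ((A \<circ> D) z) = cinner w ((D \<circ> A) z)"
      by (metis comp_apply eq_iff_diff_eq_0 less_irrefl zero_less_norm_iff)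
  qed
  then show "A \<in> commutant S"
    using \<open>A \<in> BH\<close> by (simp add: commutant_iff BH_iff)
qed

lemma von_neumann_algebra_commutant:
  fixes S :: "('a::chilbert_space \<Rightarrow> 'a) set"
  assumes "S \<subseteq> BH" and adj_closed: "\<And>D. D \<in> S \<Longrightarrow> adj D \<in> S"
  shows "von_neumann_algebra (commutant S)"
proof -
  have bop_S: "bop D" if "D \<in> S" for D
    using assms that by (auto simp: BH_iff)
  have commutes: "A \<circ> D = D \<circ> A" if "A \<in> commutant S" and "D \<in> S" for A D
    using that by (simp add: commutant_iff)
  have "op_add A B \<in> commutant S" and "A \<circ> B \<in> commutant S" and "op_scale c A \<in> commutant S"
    if "A \<in> commutant S" and "B \<in> commutant S" for A B c
  proof -
    have "bop A" and "bop B"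
      using that by (simp_all add: commutant_iff)
    have "op_add A B \<circ> D = D \<circ> op_add A B" and "(A \<circ> B) \<circ> D = D \<circ> (A \<circ> B)"
      and "op_scale c A \<circ> D = D \<circ> op_scale c A" if "D \<in> S" for D
      using commutes[OF \<open>A \<in> commutant S\<close> that] commutes[OF \<open>B \<in> commutant S\<close> that] bop_S[OF that]
      by (simp_all add: fun_eq_iff op_add_def op_scale_def bop_add bop_scaleC)
    then show "op_add A B \<in> commutant S" and "A \<circ> B \<in> commutant S" and "op_scale c A \<in> commutant S"
      using \<open>bop A\<close> \<open>bop B\<close> by (simp_all add: commutant_iff bop_op_add bop_comp bop_op_scale)
  qed
  moreover have "adj A \<in> commutant S" if "A \<in> commutant S" for A
  proof -
    have "bop A"
      using that by (simp add: commutant_iff)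
    have "adj A \<circ> D = D \<circ> adj A" if "D \<in> S" for D
    proof -
      have "adj A \<circ> adj (adj D) = adj (adj D) \<circ> adj A"
        using adj_closed[OF that] by (intro adj_commute \<open>bop A\<close> bop_S commutes \<open>A \<in> commutant S\<close>)
      then show ?thesis
        by (simp add: adj_adj bop_S that)
    qed
    then show ?thesis
      using \<open>bop A\<close> by (simp add: commutant_iff bop_adj)
  qed
  moreover have "id \<in> commutant S"
    by (simp add: commutant_iff bop_id)
  ultimately show ?thesis
    using wot_closed_commutant[OF \<open>S \<subseteq> BH\<close>]
    by (auto simp: von_neumann_algebra_def commutant_def)
qed

lemma funpow_fixed_point: "f x = x \<Longrightarrow> (f ^^ n) x = x"
  by (induction n) simp_all

lemma fixed_points_subset_decoherence_free:
  assumes vN: "von_neumann_algebra (fixed_points Phi)"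
  shows "fixed_points Phi \<subseteq> decoherence_free Phi"
proof
  fix A
  assume A: "A \<in> fixed_points Phi"
  then have "adj A \<in> fixed_points Phi"
    using vN by (simp add: von_neumann_algebra_def)
  then have "Phi (adj A \<circ> A) = adj A \<circ> A" and "Phi (A \<circ> adj A) = A \<circ> adj A"
    using vN A by (auto simp: von_neumann_algebra_def fixed_points_def)
  then show "A \<in> decoherence_free Phi"
    using A by (auto simp: decoherence_free_def mult_domain_def fixed_points_def funpow_fixed_point)
qed

lemma decoherence_free_subset_mult_domain: "decoherence_free Phi \<subseteq> mult_domain Phi"
proof -
  have "decoherence_free Phi \<subseteq> mult_domain (Phi ^^ 1)"
    unfolding decoherence_free_def by auto
  then show ?thesis
    by simp
qed

section \<open>Kraus channels\<close>

locale unital_kraus_family =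
  fixes V :: "nat \<Rightarrow> 'a::chilbert_space \<Rightarrow> 'a"
  assumes bop_V: "\<And>k. bop (V k)"
    and completeness_relation: "\<And>x. (\<lambda>k. adj (V k) (V k x)) sums x"
begin

lemma cinner_adj_V: "cinner x (adj (V k) y) = cinner (V k x) y"
  by (simp add: cinner_adj_right[OF bop_V])

lemma sums_norm_V_sq: "(\<lambda>k. (norm (V k x))\<^sup>2) sums (norm x)\<^sup>2"
proof -
  have "(\<lambda>k. cinner x (adj (V k) (V k x))) sums cinner x x"
    by (rule bounded_linear.sums[OF bounded_linear_cinner_right completeness_relation])
  then have "(\<lambda>k. complex_of_real ((norm (V k x))\<^sup>2)) sums complex_of_real ((norm x)\<^sup>2)"
    by (simp only: cinner_adj_V cinner_self_norm)
  then show ?thesis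
    by (simp only: sums_of_real_iff)
qed

lemma sum_norm_V_sq_le: "finite I \<Longrightarrow> (\<Sum>k\<in>I. (norm (V k x))\<^sup>2) \<le> (norm x)\<^sup>2"
  using sum_le_suminf[OF sums_summable[OF sums_norm_V_sq[of x]]]
    sums_unique[OF sums_norm_V_sq[of x]]
  by simp

lemma norm_sum_kraus_le:
  assumes "0 \<le> K" and K: "\<And>y. norm (A y) \<le> K * norm y" and "finite I"
  shows "norm (\<Sum>k\<in>I. adj (V k) (A (V k x))) \<le> K * L2_set (\<lambda>k. norm (V k x)) I"
proof -
  define z where "z = (\<Sum>k\<in>I. adj (V k) (A (V k x)))"
  define Lz Lx where "Lz = L2_set (\<lambda>k. norm (V k z)) I" and "Lx = L2_set (\<lambda>k. norm (V k x)) I"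
  have "(norm z)\<^sup>2 = cmod (\<Sum>k\<in>I. cinner (V k z) (A (V k x)))"
    unfolding cinner_adj_V[symmetric] cinner_sum_right[symmetric] z_def[symmetric]
    by (simp only: cinner_self_norm norm_of_real abs_power2 power2_abs)
  also have "\<dots> \<le> (\<Sum>k\<in>I. norm (V k z) * (K * norm (V k x)))"
  proof (intro order_trans[OF norm_sum] sum_mono)
    show "cmod (cinner (V k z) (A (V k x))) \<le> norm (V k z) * (K * norm (V k x))" for k
      using cinner_cauchy_schwarz[of "V k z" "A (V k x)"] K[of "V k x"]
      by (meson mult_left_mono norm_ge_zero order_trans)
  qed
  also have "\<dots> = K * (\<Sum>k\<in>I. \<bar>norm (V k z)\<bar> * \<bar>norm (V k x)\<bar>)"
    by (simp add: sum_distrib_left mult_ac)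
  also have "\<dots> \<le> K * (Lz * Lx)"
    unfolding Lz_def Lx_def by (rule mult_left_mono[OF L2_set_mult_ineq \<open>0 \<le> K\<close>])
  also have "\<dots> \<le> K * (norm z * Lx)"
  proof -
    have "Lz \<le> norm z"
      unfolding Lz_def L2_set_def using sum_norm_V_sq_le[OF \<open>finite I\<close>, of z]
      by (simp add: real_le_lsqrt)
    then show ?thesis
      using \<open>0 \<le> K\<close> by (intro mult_left_mono mult_right_mono) (simp_all add: Lx_def L2_set_nonneg)
  qed
  finally have "(norm z)\<^sup>2 \<le> K * Lx * norm z"
    by (simp only: mult_ac)
  then have "norm z \<le> K * Lx"
    by (rule le_of_sq_le_mult[rotated]) (simp add: \<open>0 \<le> K\<close> Lx_def L2_set_nonneg)
  then show ?thesis
    by (simp only: z_def Lx_def)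
qed

lemma kraus_channel_sums:
  assumes "bop A"
  shows "(\<lambda>k. adj (V k) (A (V k x))) sums kraus_channel V A x"
proof -
  obtain K where "0 \<le> K" and K: "\<And>y. norm (A y) \<le> K * norm y"
    using bop_bound[OF assms] by blast
  define s where "s m = (\<Sum>k<m. (norm (V k x))\<^sup>2)" for m
  have "summable (\<lambda>k. adj (V k) (A (V k x)))"
  proof (rule summable_Cauchy')
    show "eventually (\<lambda>m. \<forall>n\<ge>m. norm (\<Sum>k\<in>{m..<n}. adj (V k) (A (V k x)))
        \<le> K * sqrt ((norm x)\<^sup>2 - s m)) sequentially"
    proof (intro always_eventually allI impI)
      fix m n :: nat
      assume "m \<le> n"
      then have "s m + (\<Sum>k\<in>{m..<n}. (norm (V k x))\<^sup>2) = s n"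
        unfolding s_def atLeast0LessThan[symmetric] by (simp add: sum.atLeastLessThan_concat)
      moreover have "s n \<le> (norm x)\<^sup>2"
        unfolding s_def by (rule sum_norm_V_sq_le) simp
      ultimately have "(\<Sum>k\<in>{m..<n}. (norm (V k x))\<^sup>2) \<le> (norm x)\<^sup>2 - s m"
        by linarith
      then have "L2_set (\<lambda>k. norm (V k x)) {m..<n} \<le> sqrt ((norm x)\<^sup>2 - s m)"
        by (simp add: L2_set_def)
      then show "norm (\<Sum>k\<in>{m..<n}. adj (V k) (A (V k x))) \<le> K * sqrt ((norm x)\<^sup>2 - s m)"
        using norm_sum_kraus_le[OF \<open>0 \<le> K\<close> K, of "{m..<n}" x] \<open>0 \<le> K\<close>
        by (meson finite_atLeastLessThan mult_left_mono order_trans)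
    qed
    have "s \<longlonglongrightarrow> (norm x)\<^sup>2"
      using sums_norm_V_sq[of x] by (simp add: sums_def s_def[abs_def])
    then show "(\<lambda>m. K * sqrt ((norm x)\<^sup>2 - s m)) \<longlonglongrightarrow> 0"
      by (auto intro!: tendsto_eq_intros)
  qed
  moreover have "kraus_channel V A x = (\<Sum>k. adj (V k) (A (V k x)))"
    by (simp add: kraus_channel_def suminf_eq_lim)
  ultimately show ?thesis
    by (simp add: summable_sums)
qed

lemma cinner_kraus_channel_sums:
  assumes "bop A"
  shows "(\<lambda>k. cinner (V k y) (A (V k x))) sums cinner y (kraus_channel V A x)"
  using bounded_linear.sums[OF bounded_linear_cinner_right kraus_channel_sums[OF assms]]
  by (simp only: cinner_adj_V)

lemma cinner_kraus_channel_adj: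
  assumes "bop A"
  shows "cinner y (kraus_channel V (adj A) x) = cinner (kraus_channel V A y) x"
proof (rule sums_unique2)
  show "(\<lambda>k. cinner (V k y) (adj A (V k x))) sums cinner y (kraus_channel V (adj A) x)"
    by (rule cinner_kraus_channel_sums[OF bop_adj[OF assms]])
  have "(\<lambda>k. cnj (cinner (V k x) (A (V k y)))) sums cnj (cinner x (kraus_channel V A y))"
    using cinner_kraus_channel_sums[OF assms] by (simp only: sums_cnj)
  then show "(\<lambda>k. cinner (V k y) (adj A (V k x))) sums cinner (kraus_channel V A y) x"
    by (simp only: cnj_cinner cinner_adj_right[OF assms])
qed

lemma kraus_channel_adj_fixed:
  assumes "bop A" and "kraus_channel V A = A"
  shows "kraus_channel V (adj A) = adj A"
proof
  show "kraus_channel V (adj A) x = adj A x" for x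
    by (rule cinner_ext) (simp add: cinner_kraus_channel_adj assms cinner_adj_right)
qed

lemma kraus_channel_eq_if_commutes:
  assumes "bop A" and "\<And>k. A \<circ> V k = V k \<circ> A"
  shows "kraus_channel V A = A"
proof
  fix x
  have "(\<lambda>k. adj (V k) (V k (A x))) sums kraus_channel V A x"
    using kraus_channel_sums[OF \<open>bop A\<close>, of x] assms(2) by (simp add: comp_def fun_eq_iff)
  then show "kraus_channel V A x = A x"
    by (rule sums_unique2[OF _ completeness_relation])
qed

text \<open>The operator identity
  \<open>\<Phi>(A\<^sup>*A) - \<Phi>(A)\<^sup>*A - A\<^sup>*\<Phi>(A) + A\<^sup>*A = \<Sum>\<^sub>k [A, V\<^sub>k]\<^sup>*[A, V\<^sub>k]\<close>,
  evaluated at \<open>\<langle>x, \<cdot> x\<rangle>\<close>.\<close>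
lemma commutator_defect_sums:
  assumes A: "bop A"
  shows "(\<lambda>k. complex_of_real ((norm (A (V k x) - V k (A x)))\<^sup>2)) sums
    (cinner x (kraus_channel V (adj A \<circ> A) x) - cinner (kraus_channel V A x) (A x)
      - cinner (A x) (kraus_channel V A x) + cinner (A x) (A x))"
proof -
  have "(\<lambda>k. cinner (A (V k x)) (A (V k x))) sums cinner x (kraus_channel V (adj A \<circ> A) x)"
    using cinner_kraus_channel_sums[OF bop_comp[OF bop_adj[OF A] A], of x x]
    by (simp only: o_apply cinner_adj_right[OF A, symmetric])
  moreover have "(\<lambda>k. cinner (V k (A x)) (A (V k x))) sums cinner (A x) (kraus_channel V A x)"
    by (rule cinner_kraus_channel_sums[OF A])
  moreover from this
  have "(\<lambda>k. cinner (A (V k x)) (V k (A x))) sums cinner (kraus_channel V A x) (A x)"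
    by (subst (asm) sums_cnj[symmetric]) (simp only: cnj_cinner)
  moreover have "(\<lambda>k. cinner (V k (A x)) (V k (A x))) sums cinner (A x) (A x)"
    using sums_of_real[OF sums_norm_V_sq[of "A x"]] by (simp only: cinner_self_norm)
  ultimately show ?thesis
    unfolding of_real_norm_diff_sq by (intro sums_add sums_diff)
qed

lemma commutes_with_V_if_fixed:
  assumes A: "bop A" and fixed: "kraus_channel V A = A"
    and fixed_sq: "kraus_channel V (adj A \<circ> A) = adj A \<circ> A"
  shows "A \<circ> V k = V k \<circ> A"
proof
  fix x
  have "(\<lambda>k. complex_of_real ((norm (A (V k x) - V k (A x)))\<^sup>2)) sums complex_of_real 0"
    using commutator_defect_sums[OF A, of x]
    by (simp add: fixed fixed_sq cinner_adj_right[OF A, symmetric])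
  then have "(\<lambda>k. (norm (A (V k x) - V k (A x)))\<^sup>2) sums 0"
    by (simp only: sums_of_real_iff)
  then have "\<forall>k. (norm (A (V k x) - V k (A x)))\<^sup>2 = 0"
    using suminf_eq_zero_iff[of "\<lambda>k. (norm (A (V k x) - V k (A x)))\<^sup>2"] by (simp add: sums_iff)
  then show "(A \<circ> V k) x = (V k \<circ> A) x"
    by simp
qed

lemma fixed_point_in_commutant:
  assumes "A \<in> fixed_points (kraus_channel V)" and "A \<in> mult_domain (kraus_channel V)"
  shows "A \<in> commutant (range V \<union> adj ` range V)"
proof -
  have A: "bop A" and fixed: "kraus_channel V A = A"
    using assms(1) by (auto simp: fixed_points_def BH_iff)
  have fixed_sq: "kraus_channel V (adj A \<circ> A) = adj A \<circ> A"
    and fixed_sq': "kraus_channel V (A \<circ> adj A) = A \<circ> adj A"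
    using assms(2) fixed by (auto simp: mult_domain_def)
  have comm: "A \<circ> V k = V k \<circ> A" for k
    by (rule commutes_with_V_if_fixed[OF A fixed fixed_sq])
  have "adj A \<circ> V k = V k \<circ> adj A" for k
    using commutes_with_V_if_fixed[OF bop_adj[OF A] kraus_channel_adj_fixed[OF A fixed]] fixed_sq'
    by (simp add: adj_adj[OF A])
  then have "A \<circ> adj (V k) = adj (V k) \<circ> A" for k
    using adj_commute[OF bop_adj[OF A] bop_V] by (simp add: adj_adj[OF A])
  then show ?thesis
    using A comm by (auto simp: commutant_def BH_iff)
qed

lemma commutant_subset_fixed_points:
  "commutant (range V \<union> adj ` range V) \<subseteq> fixed_points (kraus_channel V)"
  by (auto simp: commutant_def fixed_points_def BH_iff intro!: kraus_channel_eq_if_commutes)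

lemma fixed_points_eq_commutant:
  assumes "fixed_points (kraus_channel V) \<subseteq> mult_domain (kraus_channel V)"
  shows "fixed_points (kraus_channel V) = commutant (range V \<union> adj ` range V)"
  using assms fixed_point_in_commutant commutant_subset_fixed_points by blast

end

theorem mainTheorem1:
  fixes V :: "nat \<Rightarrow> ('a::chilbert_space \<Rightarrow> 'a)"
  assumes sep: "separable_space TYPE('a)"
    and bounded: "\<And>k. V k \<in> BH"
    and trace_pres: "\<And>x. (\<lambda>n. \<Sum>k<n. adj (V k) (V k x)) \<longlonglongrightarrow> x"
  shows "(von_neumann_algebra (fixed_points (kraus_channel V))
            \<longleftrightarrow> fixed_points (kraus_channel V) \<subseteq> decoherence_free (kraus_channel V))
       \<and> (von_neumann_algebra (fixed_points (kraus_channel V))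
            \<longrightarrow> fixed_points (kraus_channel V) = commutant (range V \<union> adj ` range V))"
proof -
  interpret unital_kraus_family V
  proof
    show "bop (V k)" for k
      using bounded by (simp add: BH_iff)
    show "(\<lambda>k. adj (V k) (V k x)) sums x" for x
      using trace_pres by (simp add: sums_def)
  qed
  let ?F = "fixed_points (kraus_channel V)" and ?S = "range V \<union> adj ` range V"
  have "?S \<subseteq> BH" and "\<And>D. D \<in> ?S \<Longrightarrow> adj D \<in> ?S"
    using bounded by (auto simp: BH_iff adj_adj[OF bop_V] bop_adj[OF bop_V])
  then have "von_neumann_algebra (commutant ?S)"
    by (rule von_neumann_algebra_commutant)
  moreover have "?F = commutant ?S" if "?F \<subseteq> decoherence_free (kraus_channel V)"
    using fixed_points_eq_commutant that decoherence_free_subset_mult_domain by blast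
  ultimately show ?thesis
    using fixed_points_subset_decoherence_free by metis
qed

end
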